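(* Let $G$ be a fixed graph, $k$ an integer, and $G_0,G_1,\dots,G_r=G$ a sequence of graphs on the same vertex set where $G_i$ is obtained from $G_{i+1}$ by deleting an edge $\{v_i,u_i\}$. Assume that for some $\alpha\in[0,1]$, for every $i=0,\dots,r-1$ and all $c,q\in[k]$ with $c\ne q$, the set $\Omega_i(c,c)$ is $\alpha$-isomorphic to $\Omega_i(q,c)$ with $\alpha$-function $H_i(\cdot,q)$. Let $\mu$ be the uniform distribution over the $k$-colourings of $G$ and $\mu'$ the distribution of the colouring $Y_r$ returned by the procedure described in the context. Then $\|\mu-\mu'\|\le r\cdot\alpha$.
   Context: $[k]=\{1,\dots,k\}$; $\Omega_i$ is the set of proper $k$-colourings of $G_i$ and $\Omega_i(c,q)$ the set of those assigning colour $c$ to $v_i$ and $q$ to $u_i$. $\|\nu_a-\nu_b\|=\max_A|\nu_a(A)-\nu_b(A)|$. For $\sigma\in\Omega_i$ and $q\ne\sigma_{v_i}$, the disagreement graph $Q$ is the subgraph of $G_i$ induced by all vertices reachable from $v_i$ by a path in $G_i$ whose vertices all have colours in $\{\sigma_{v_i},q\}$; $H_i(\sigma,q)$ is obtained from $\sigma$ by swapping colours $\sigma_{v_i}$ and $q$ on the vertices of $Q$. $\Omega'$ is $\alpha$-isomorphic to $\Omega''$ if there exist $A\subseteq\Omega'$, $B\subseteq\Omega''$ with $|A|\ge(1-\alpha)|\Omega'|$, $|B|\ge(1-\alpha)|\Omega''|$ and a bijection $h:A\to B$; a map $F$ on $\Omega'$ is an $\alpha$-function if $F=h$ on $A$ for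 such $A,B,h$. Procedure: $Y_0$ is uniformly distributed over $\Omega_0$; for $i=0,\dots,r-1$, if $Y_i(v_i)\ne Y_i(u_i)$ set $Y_{i+1}=Y_i$, otherwise choose $q$ uniformly from $[k]\setminus\{Y_i(v_i)\}$ and set $Y_{i+1}=H_i(Y_i,q)$. Output $Y_r$. *)

theory Defs
  imports "HOL-Probability.Probability"
begin

text \<open>Graphs on a finite vertex set V are given by their edge sets (sets of 2-element sets).
  Colourings are functions 'a => nat, extensional on V (value undefined outside V).\<close>

definition proper :: "'a set set \<Rightarrow> ('a \<Rightarrow> nat) \<Rightarrow> bool" where
  "proper E \<sigma> \<longleftrightarrow> (\<forall>x y. {x, y} \<in> E \<longrightarrow> x \<noteq> y \<longrightarrow> \<sigma> x \<noteq> \<sigma> y)"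

definition colourings :: "'a set \<Rightarrow> nat \<Rightarrow> 'a set set \<Rightarrow> ('a \<Rightarrow> nat) set" where
  "colourings V k E = {\<sigma> \<in> V \<rightarrow>\<^sub>E {1..k}. proper E \<sigma>}"

definition colourings_vu ::
  "'a set \<Rightarrow> nat \<Rightarrow> 'a set set \<Rightarrow> 'a \<Rightarrow> 'a \<Rightarrow> nat \<Rightarrow> nat \<Rightarrow> ('a \<Rightarrow> nat) set" where
  "colourings_vu V k E v u c q = {\<sigma> \<in> colourings V k E. \<sigma> v = c \<and> \<sigma> u = q}"

inductive_set reach :: "'a set set \<Rightarrow> ('a \<Rightarrow> nat) \<Rightarrow> nat set \<Rightarrow> 'a \<Rightarrow> 'a set"
  for E \<sigma> S v where
  start: "\<sigma> v \<in> S \<Longrightarrow> v \<in> reach E \<sigma> S v"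
| step: "x \<in> reach E \<sigma> S v \<Longrightarrow> {x, y} \<in> E \<Longrightarrow> \<sigma> y \<in> S \<Longrightarrow> y \<in> reach E \<sigma> S v"

definition disagreement :: "'a set set \<Rightarrow> 'a \<Rightarrow> ('a \<Rightarrow> nat) \<Rightarrow> nat \<Rightarrow> 'a set" where
  "disagreement E v \<sigma> q = reach E \<sigma> {\<sigma> v, q} v"

definition swapH :: "'a set set \<Rightarrow> 'a \<Rightarrow> ('a \<Rightarrow> nat) \<Rightarrow> nat \<Rightarrow> ('a \<Rightarrow> nat)" where
  "swapH E v \<sigma> q = (\<lambda>x. if x \<in> disagreement E v \<sigma> q then
       (if \<sigma> x = \<sigma> v then q else if \<sigma> x = q then \<sigma> v else \<sigma> x) else \<sigma> x)"

definition alpha_iso_with :: "real \<Rightarrow> 'b set \<Rightarrow> 'c set \<Rightarrow> ('b \<Rightarrow> 'c) \<Rightarrow> bool" where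
  "alpha_iso_with \<alpha> \<Omega>1 \<Omega>2 F \<longleftrightarrow>
     (\<exists>A B h. A \<subseteq> \<Omega>1 \<and> B \<subseteq> \<Omega>2 \<and>
        real (card A) \<ge> (1 - \<alpha>) * real (card \<Omega>1) \<and>
        real (card B) \<ge> (1 - \<alpha>) * real (card \<Omega>2) \<and>
        bij_betw h A B \<and> (\<forall>x\<in>A. F x = h x))"

definition tv_dist :: "'b pmf \<Rightarrow> 'b pmf \<Rightarrow> real" where
  "tv_dist p p' = (SUP A. \<bar>measure_pmf.prob p A - measure_pmf.prob p' A\<bar>)"

definition proc_step :: "nat \<Rightarrow> 'a set set \<Rightarrow> 'a \<Rightarrow> 'a \<Rightarrow> ('a \<Rightarrow> nat) \<Rightarrow> ('a \<Rightarrow> nat) pmf" where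
  "proc_step k E v u \<sigma> =
     (if \<sigma> v \<noteq> \<sigma> u then return_pmf \<sigma>
      else map_pmf (\<lambda>q. swapH E v \<sigma> q) (pmf_of_set ({1..k} - {\<sigma> v})))"

fun procY :: "'a set \<Rightarrow> nat \<Rightarrow> (nat \<Rightarrow> 'a set set) \<Rightarrow> (nat \<Rightarrow> 'a) \<Rightarrow> (nat \<Rightarrow> 'a) \<Rightarrow> nat
               \<Rightarrow> ('a \<Rightarrow> nat) pmf" where
  "procY V k G v u 0 = pmf_of_set (colourings V k (G 0))"
| "procY V k G v u (Suc i) = bind_pmf (procY V k G v u i) (proc_step k (G i) (v i) (u i))"

end

theory Submission
  imports Defs
begin

text \<open>
  Measure how far a distribution p is from the uniform distribution on a finite set W by its
  deficit, the total mass by which p falls short of 1/|W| on W; it dominates the total variation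
  distance. Running a kernel from p instead of from the uniform distribution on W costs at most
  the deficit of p, so by induction over the r steps it suffices that one step, started from the
  uniform distribution on \<Omega>_i, lands within deficit \<alpha> of the uniform distribution on
  \<Omega>_(i+1). In that step every colouring of \<Omega>_(i+1) keeps its own mass 1/|\<Omega>_i|, and
  every colouring in the image of an \<alpha>-function H(-,q) gains at least 1/((k-1)|\<Omega>_i|).
  These images cover a (1-\<alpha>)-fraction both of \<Omega>_(i+1) and of k-1 copies of
  \<Omega>_i - \<Omega>_(i+1), which fills all but an \<alpha>-fraction of the shortfall.
\<close>

definition uniform_deficit :: "'b set \<Rightarrow> 'b pmf \<Rightarrow> real" where
  "uniform_deficit W p = (\<Sum>t\<in>W. max 0 (1 / card W - pmf p t))"

lemma uniform_deficit_pmf_of_set: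
  assumes "finite W" "W \<noteq> {}"
  shows "uniform_deficit W (pmf_of_set W) = 0"
  using assms by (simp add: uniform_deficit_def)

lemma prob_pmf_of_set_minus_le_uniform_deficit:
  assumes "finite W" "W \<noteq> {}"
  shows "measure_pmf.prob (pmf_of_set W) A - measure_pmf.prob p A \<le> uniform_deficit W p"
proof -
  have "measure_pmf.prob (pmf_of_set W) A = (\<Sum>t\<in>W \<inter> A. 1 / card W)"
    using assms by (simp add: measure_pmf_of_set)
  moreover have "(\<Sum>t\<in>W \<inter> A. pmf p t) \<le> measure_pmf.prob p A"
    using assms by (simp add: measure_measure_pmf_finite[symmetric] measure_pmf.finite_measure_mono)
  moreover have "(\<Sum>t\<in>W \<inter> A. 1 / card W - pmf p t) \<le> (\<Sum>t\<in>W \<inter> A. max 0 (1 / card W - pmf p t))"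
    by (rule sum_mono) simp
  moreover have "\<dots> \<le> uniform_deficit W p"
    unfolding uniform_deficit_def by (rule sum_mono2) (auto simp: assms)
  ultimately show ?thesis by (simp add: sum_subtractf)
qed

lemma tv_dist_pmf_of_set_le_uniform_deficit:
  assumes "finite W" "W \<noteq> {}"
  shows "tv_dist (pmf_of_set W) p \<le> uniform_deficit W p"
  unfolding tv_dist_def
proof (rule cSUP_least)
  fix A
  have "measure_pmf.prob q (- A) = 1 - measure_pmf.prob q A" for q :: "'a pmf"
    using measure_pmf.prob_compl[of A q] by (simp add: Compl_eq_Diff_UNIV)
  then show "\<bar>measure_pmf.prob (pmf_of_set W) A - measure_pmf.prob p A\<bar> \<le> uniform_deficit W p"
    using prob_pmf_of_set_minus_le_uniform_deficit[OF assms, of A p]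
      prob_pmf_of_set_minus_le_uniform_deficit[OF assms, of "- A" p]
    by auto
qed simp

lemma sum_pmf_mult_le_pmf_bind:
  assumes "finite S"
  shows "(\<Sum>s\<in>S. pmf p s * pmf (K s) t) \<le> pmf (bind_pmf p K) t"
proof -
  have "(\<Sum>s\<in>S. pmf p s * pmf (K s) t) = (\<integral>s. pmf (K s) t * indicator S s \<partial>measure_pmf p)"
    by (subst integral_measure_pmf_real[where A = S]) (auto simp: assms mult.commute indicator_def)
  also have "\<dots> \<le> (\<integral>s. pmf (K s) t \<partial>measure_pmf p)"
    by (rule integral_mono)
       (auto intro!: measure_pmf.integrable_const_bound[where B = 1] pmf_le_1 split: split_indicator)
  finally show ?thesis by (simp add: pmf_bind)
qed

lemma uniform_deficit_bind_le:
  assumes W: "finite W" "W \<noteq> {}" and "finite W'"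
  shows "uniform_deficit W' (bind_pmf p K)
           \<le> uniform_deficit W' (bind_pmf (pmf_of_set W) K) + uniform_deficit W p"
proof -
  define d where "d s = max 0 (1 / card W - pmf p s)" for s
  define e where "e t = (\<Sum>s\<in>W. d s * pmf (K s) t)" for t
  have "pmf (bind_pmf (pmf_of_set W) K) t - e t = (\<Sum>s\<in>W. (1 / card W - d s) * pmf (K s) t)" for t
    using W by (simp add: e_def pmf_bind_pmf_of_set sum_divide_distrib sum_subtractf left_diff_distrib)
  also have "\<dots> t \<le> (\<Sum>s\<in>W. pmf p s * pmf (K s) t)" for t
    by (intro sum_mono mult_right_mono) (auto simp: d_def)
  also have "\<dots> t \<le> pmf (bind_pmf p K) t" for t
    by (rule sum_pmf_mult_le_pmf_bind[OF W(1)])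
  finally have bind_ge: "pmf (bind_pmf (pmf_of_set W) K) t - e t \<le> pmf (bind_pmf p K) t" for t .
  have "0 \<le> e t" for t
    by (auto simp: e_def d_def intro!: sum_nonneg)
  with bind_ge have "max 0 (1 / card W' - pmf (bind_pmf p K) t)
      \<le> max 0 (1 / card W' - pmf (bind_pmf (pmf_of_set W) K) t) + e t" for t
    by (smt (verit))
  then have "uniform_deficit W' (bind_pmf p K)
      \<le> uniform_deficit W' (bind_pmf (pmf_of_set W) K) + (\<Sum>t\<in>W'. e t)"
    unfolding uniform_deficit_def by (simp add: sum_mono flip: sum.distrib)
  also have "(\<Sum>t\<in>W'. e t) = (\<Sum>s\<in>W. d s * measure_pmf.prob (K s) W')"
    using assms(3) by (simp add: e_def sum.swap[of _ W' W] sum_distrib_left measure_measure_pmf_finite)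
  also have "\<dots> \<le> uniform_deficit W p"
    unfolding uniform_deficit_def d_def
    by (intro sum_mono mult_left_le) auto
  finally show ?thesis by simp
qed

lemma uniform_deficit_iterated_bind_le:
  fixes W :: "nat \<Rightarrow> 'b set" and p :: "nat \<Rightarrow> 'b pmf"
  assumes W: "\<And>i. i \<le> r \<Longrightarrow> finite (W i) \<and> W i \<noteq> {}"
    and p0: "p 0 = pmf_of_set (W 0)"
    and pSuc: "\<And>i. i < r \<Longrightarrow> p (Suc i) = bind_pmf (p i) (K i)"
    and step: "\<And>i. i < r \<Longrightarrow> uniform_deficit (W (Suc i)) (bind_pmf (pmf_of_set (W i)) (K i)) \<le> \<alpha>"
  shows "uniform_deficit (W r) (p r) \<le> real r * \<alpha>"
proof -
  have "i \<le> r \<Longrightarrow> uniform_deficit (W i) (p i) \<le> real i * \<alpha>" for i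
  proof (induction i)
    case 0
    then show ?case using W[of 0] by (simp add: p0 uniform_deficit_pmf_of_set)
  next
    case (Suc i)
    then have "uniform_deficit (W (Suc i)) (p (Suc i)) \<le> \<alpha> + uniform_deficit (W i) (p i)"
      using uniform_deficit_bind_le[of "W i" "W (Suc i)" "p i" "K i"] W[of i] W[of "Suc i"]
        step[of i] pSuc[of i] by fastforce
    with Suc show ?case by (simp add: algebra_simps)
  qed
  then show ?thesis by simp
qed

lemma sum_shortfall_le_of_mass_bounds:
  fixes m :: "'b \<Rightarrow> real" and M a \<alpha> :: real
  assumes fin: "finite S" and RS: "R \<subseteq> S" and ne: "S \<noteq> {}" and SM: "card S \<le> M"
    and a: "0 < a" and \<alpha>: "0 \<le> \<alpha>"
    and m_ge: "\<And>t. t \<in> S \<Longrightarrow> 1 / M \<le> m t"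
    and m_ge_R: "\<And>t. t \<in> R \<Longrightarrow> (1 + a) / M \<le> m t"
    and card_R: "(1 - \<alpha>) * card S \<le> card R" "(1 - \<alpha>) * (M - card S) \<le> a * card R"
  shows "(\<Sum>t\<in>S. max 0 (1 / card S - m t)) \<le> \<alpha>"
proof -
  define N where "N = real (card S)"
  have N: "0 < N" "N \<le> M" using fin ne SM by (auto simp: N_def card_gt_0_iff)
  define g where "g = 1 / N - 1 / M"
  \<comment> \<open>Each element of R is topped up by \<delta>; either value of the minimum is paid for by one
    of the two lower bounds on card R.\<close>
  define \<delta> where "\<delta> = min g (a / M)"
  have g: "0 \<le> g" using N by (simp add: g_def frac_le)
  have N_g: "N * g = (M - N) / M" using N by (simp add: g_def field_simps)
  have R_\<delta>: "(1 - \<alpha>) * ((M - N) / M) \<le> card R * \<delta>"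
  proof -
    have "(1 - \<alpha>) * ((M - N) / M) = (1 - \<alpha>) * N * g" by (simp only: N_g mult.assoc)
    also have "\<dots> \<le> card R * g" using card_R(1) g by (simp add: N_def mult_right_mono)
    finally have "(1 - \<alpha>) * ((M - N) / M) \<le> card R * g" .
    moreover have "(1 - \<alpha>) * ((M - N) / M) \<le> card R * (a / M)"
      using card_R(2) N by (simp add: N_def divide_right_mono mult.commute)
    ultimately show ?thesis by (simp add: \<delta>_def min_def)
  qed
  have "max 0 (1 / N - m t) \<le> g - (if t \<in> R then \<delta> else 0)" if "t \<in> S" for t
    using m_ge[OF that] m_ge_R[of t] g N unfolding g_def \<delta>_def
    by (cases "t \<in> R") (auto simp: add_divide_distrib)
  then have "(\<Sum>t\<in>S. max 0 (1 / N - m t)) \<le> (\<Sum>t\<in>S. g - (if t \<in> R then \<delta> else 0))"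
    by (rule sum_mono)
  also have "\<dots> = N * g - card R * \<delta>"
    using fin RS by (simp add: sum_subtractf N_def Int_absorb1 Collect_conj_eq flip: sum.inter_filter)
  also have "\<dots> \<le> \<alpha> * ((M - N) / M)"
    using R_\<delta> left_diff_distrib[of 1 \<alpha> "(M - N) / M"] by (simp add: N_g)
  also have "\<dots> \<le> \<alpha>" using N \<alpha> by (intro mult_left_le) auto
  finally show ?thesis by (simp add: N_def)
qed

lemma alpha_iso_with_card_image:
  assumes "alpha_iso_with \<alpha> X Y F" "finite Y"
  shows "(1 - \<alpha>) * card X \<le> card (Y \<inter> F ` X)" and "(1 - \<alpha>) * card Y \<le> card (Y \<inter> F ` X)"
proof -
  obtain A B h where AB: "A \<subseteq> X" "B \<subseteq> Y" "(1 - \<alpha>) * card X \<le> card A" "(1 - \<alpha>) * card Y \<le> card B"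
      and h: "bij_betw h A B" "\<forall>x\<in>A. F x = h x"
    using assms(1) unfolding alpha_iso_with_def by blast
  have "B = F ` A" using h by (simp add: bij_betw_def)
  then have "card B \<le> card (Y \<inter> F ` X)"
    using AB assms(2) by (intro card_mono) auto
  moreover have "card A = card B" using h(1) by (rule bij_betw_same_card)
  ultimately show "(1 - \<alpha>) * card X \<le> card (Y \<inter> F ` X)" "(1 - \<alpha>) * card Y \<le> card (Y \<inter> F ` X)"
    using AB by linarith+
qed

lemma finite_colourings: "finite V \<Longrightarrow> finite (colourings V k E)"
  unfolding colourings_def by (rule finite_subset[of _ "V \<rightarrow>\<^sub>E {1..k}"]) (auto intro: finite_PiE)

lemma colourings_mono: "E \<subseteq> E' \<Longrightarrow> colourings V k E' \<subseteq> colourings V k E"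
  unfolding colourings_def proper_def by blast

lemma colourings_insert_edge:
  "v \<noteq> u \<Longrightarrow> colourings V k (insert {v, u} E) = {\<sigma> \<in> colourings V k E. \<sigma> v \<noteq> \<sigma> u}"
  unfolding colourings_def proper_def by (auto simp: doubleton_eq_iff)

lemma colouring_in_range: "\<sigma> \<in> colourings V k E \<Longrightarrow> x \<in> V \<Longrightarrow> \<sigma> x \<in> {1..k}"
  unfolding colourings_def by (auto simp: PiE_iff)

lemma card_eq_sum_card_fibres:
  assumes "finite X" "finite P" "f ` X \<subseteq> P"
  shows "card X = (\<Sum>p\<in>P. card {x \<in> X. f x = p})"
  using sum.group[OF assms, of "\<lambda>_. 1 :: nat"] by simp

lemma card_eq_sum_colour_pairs:
  assumes "finite V" "v \<in> V" "u \<in> V" "X \<subseteq> {\<sigma> \<in> colourings V k E. \<sigma> v \<noteq> \<sigma> u}"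
  shows "card X = (\<Sum>c\<in>{1..k}. \<Sum>q\<in>{1..k} - {c}. card (X \<inter> colourings_vu V k E v u q c))"
proof -
  define P where "P = Sigma {1..k} (\<lambda>c. {1..k} - {c})"
  have fin: "finite X" using assms(4) by (rule finite_subset) (simp add: finite_colourings assms(1))
  have key: "(\<lambda>\<sigma>. (\<sigma> u, \<sigma> v)) ` X \<subseteq> P"
    unfolding P_def using assms(4) colouring_in_range[OF _ assms(2)] colouring_in_range[OF _ assms(3)]
    by blast
  have "card X = (\<Sum>p\<in>P. card {\<sigma> \<in> X. (\<sigma> u, \<sigma> v) = p})"
    by (rule card_eq_sum_card_fibres[OF fin _ key]) (simp add: P_def)
  also have "\<dots> = (\<Sum>(c, q)\<in>P. card (X \<inter> colourings_vu V k E v u q c))"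
    using assms(4) by (intro sum.cong refl) (auto simp: colourings_vu_def intro!: arg_cong[where f = card])
  finally show ?thesis by (simp add: P_def sum.Sigma)
qed

lemma card_diff_eq_sum_colours:
  assumes "finite V" "v \<in> V"
  shows "card {\<sigma> \<in> colourings V k E. \<sigma> v = \<sigma> u}
           = (\<Sum>c\<in>{1..k}. card (colourings_vu V k E v u c c))"
proof -
  have "card {\<sigma> \<in> colourings V k E. \<sigma> v = \<sigma> u}
      = (\<Sum>c\<in>{1..k}. card {\<sigma> \<in> {\<sigma> \<in> colourings V k E. \<sigma> v = \<sigma> u}. \<sigma> v = c})"
  proof (rule card_eq_sum_card_fibres)
    show "finite {\<sigma> \<in> colourings V k E. \<sigma> v = \<sigma> u}"
      using finite_colourings[OF assms(1)] by simp
    show "(\<lambda>\<sigma>. \<sigma> v) ` {\<sigma> \<in> colourings V k E. \<sigma> v = \<sigma> u} \<subseteq> {1..k}"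
      using colouring_in_range[OF _ assms(2)] by blast
  qed simp
  also have "\<dots> = (\<Sum>c\<in>{1..k}. card (colourings_vu V k E v u c c))"
    by (intro sum.cong refl arg_cong[where f = card]) (auto simp: colourings_vu_def)
  finally show ?thesis .
qed

lemma pmf_proc_step_self: "t v \<noteq> t u \<Longrightarrow> pmf (proc_step k E v u t) t = 1"
  by (simp add: proc_step_def)

lemma pmf_proc_step_swapH_ge:
  assumes "s v = s u" "s v \<in> {1..k}" "q \<in> {1..k}" "q \<noteq> s v"
  shows "1 / (real k - 1) \<le> pmf (proc_step k E v u s) (swapH E v s q)"
proof -
  let ?S = "{1..k} - {s v}" and ?X = "swapH E v s -` {swapH E v s q}"
  have S: "finite ?S" "?S \<noteq> {}" "real (card ?S) = real k - 1" using assms(2-4) by auto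
  have "q \<in> ?S \<inter> ?X" using assms by auto
  moreover have "finite (?S \<inter> ?X)" using S(1) by blast
  ultimately have "0 < card (?S \<inter> ?X)" using card_gt_0_iff by blast
  moreover have "0 \<le> real k - 1" using assms(2) by simp
  ultimately have "1 / (real k - 1) \<le> card (?S \<inter> ?X) / card ?S"
    unfolding S(3) by (intro divide_right_mono) simp_all
  also have "\<dots> = measure_pmf.prob (pmf_of_set ?S) ?X"
    by (rule measure_pmf_of_set[OF S(2,1), symmetric])
  also have "\<dots> = pmf (proc_step k E v u s) (swapH E v s q)"
    using assms by (simp add: proc_step_def pmf_map)
  finally show ?thesis .
qed

lemma sum_pmf_proc_step_ge:
  assumes W: "finite W" "t \<in> W" and t: "t v \<noteq> t u"
  shows "1 \<le> (\<Sum>s\<in>W. pmf (proc_step k E v u s) t)"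
proof -
  have "(\<Sum>s\<in>{t}. pmf (proc_step k E v u s) t) \<le> (\<Sum>s\<in>W. pmf (proc_step k E v u s) t)"
    using W by (intro sum_mono2) auto
  then show ?thesis using pmf_proc_step_self[of t v u, OF t] by simp
qed

lemma sum_pmf_proc_step_ge_swapH:
  assumes W: "finite W" "t \<in> W" "s \<in> W" and t: "t v \<noteq> t u" "t v \<in> {1..k}" "t u \<in> {1..k}"
    and s: "s v = t u" "s u = t u" "swapH E v s (t v) = t"
  shows "1 + 1 / (real k - 1) \<le> (\<Sum>s\<in>W. pmf (proc_step k E v u s) t)"
proof -
  have "s \<noteq> t" using s t by auto
  then have "(\<Sum>s\<in>{t, s}. pmf (proc_step k E v u s) t) = 1 + pmf (proc_step k E v u s) t"
    using pmf_proc_step_self[of t v u, OF t(1)] by simp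
  moreover have "(\<Sum>s\<in>{t, s}. pmf (proc_step k E v u s) t) \<le> (\<Sum>s\<in>W. pmf (proc_step k E v u s) t)"
    using W by (intro sum_mono2) auto
  moreover have "1 / (real k - 1) \<le> pmf (proc_step k E v u s) t"
    using pmf_proc_step_swapH_ge[of s v u k "t v" E] s t by simp
  ultimately show ?thesis by linarith
qed

definition swap_images :: "'a set set \<Rightarrow> 'a \<Rightarrow> 'a \<Rightarrow> ('a \<Rightarrow> nat) set \<Rightarrow> ('a \<Rightarrow> nat) set" where
  "swap_images E v u W = {t. \<exists>s\<in>W. s v = t u \<and> s u = t u \<and> swapH E v s (t v) = t}"

lemma card_swap_images_fibre_ge:
  fixes V :: "'a set" and E :: "'a set set" and v u :: 'a and k c q :: nat and \<alpha> :: real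
  defines "S \<equiv> swap_images E v u (colourings V k E)"
    and "X \<equiv> colourings_vu V k E v u c c" and "Y \<equiv> colourings_vu V k E v u q c"
  assumes "finite V" and iso: "alpha_iso_with \<alpha> X Y (\<lambda>\<sigma>. swapH E v \<sigma> q)"
  shows "(1 - \<alpha>) * card Y \<le> card (S \<inter> Y)" and "(1 - \<alpha>) * card X \<le> card (S \<inter> Y)"
proof -
  have fin: "finite Y" using finite_colourings[OF assms(4)] by (simp add: Y_def colourings_vu_def)
  have "Y \<inter> (\<lambda>\<sigma>. swapH E v \<sigma> q) ` X \<subseteq> S \<inter> Y"
  proof
    fix t assume "t \<in> Y \<inter> (\<lambda>\<sigma>. swapH E v \<sigma> q) ` X"
    then obtain s where "t \<in> Y" "s \<in> X" "t = swapH E v s q" by blast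
    then show "t \<in> S \<inter> Y" by (auto simp: S_def X_def Y_def colourings_vu_def swap_images_def)
  qed
  then have "card (Y \<inter> (\<lambda>\<sigma>. swapH E v \<sigma> q) ` X) \<le> card (S \<inter> Y)"
    using fin by (intro card_mono) auto
  with alpha_iso_with_card_image[OF iso fin]
  show "(1 - \<alpha>) * card Y \<le> card (S \<inter> Y)" "(1 - \<alpha>) * card X \<le> card (S \<inter> Y)"
    by linarith+
qed

lemma card_swap_images_ge:
  fixes V :: "'a set" and E :: "'a set set" and v u :: 'a and k :: nat and \<alpha> :: real
  defines "W \<equiv> colourings V k E"
  defines "W' \<equiv> {\<sigma> \<in> W. \<sigma> v \<noteq> \<sigma> u}"
  defines "R \<equiv> W' \<inter> swap_images E v u W"
  assumes V: "finite V" "v \<in> V" "u \<in> V" and k: "2 \<le> k"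
    and iso: "\<forall>c\<in>{1..k}. \<forall>q\<in>{1..k}. c \<noteq> q \<longrightarrow>
               alpha_iso_with \<alpha> (colourings_vu V k E v u c c) (colourings_vu V k E v u q c)
                 (\<lambda>\<sigma>. swapH E v \<sigma> q)"
  shows "(1 - \<alpha>) * card W' \<le> card R"
    and "(1 - \<alpha>) * (real (card W) - card W') \<le> 1 / (real k - 1) * card R"
proof -
  define \<Omega> where "\<Omega> q c = colourings_vu V k E v u q c" for q c
  have \<Omega>_W': "W' \<inter> \<Omega> q c = \<Omega> q c" if "q \<noteq> c" for q c
    using that by (auto simp: W'_def W_def \<Omega>_def colourings_vu_def)
  have fibre: "(1 - \<alpha>) * card (\<Omega> q c) \<le> card (R \<inter> \<Omega> q c)"
    "(1 - \<alpha>) * card (\<Omega> c c) \<le> card (R \<inter> \<Omega> q c)"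
    if "c \<in> {1..k}" "q \<in> {1..k} - {c}" for c q
  proof -
    have "alpha_iso_with \<alpha> (\<Omega> c c) (\<Omega> q c) (\<lambda>\<sigma>. swapH E v \<sigma> q)"
      using iso that by (simp add: \<Omega>_def)
    note card_swap_images_fibre_ge[OF V(1) this[unfolded \<Omega>_def]]
    moreover have "R \<inter> \<Omega> q c = swap_images E v u W \<inter> \<Omega> q c"
      using \<Omega>_W'[of q c] that by (auto simp: R_def)
    ultimately show "(1 - \<alpha>) * card (\<Omega> q c) \<le> card (R \<inter> \<Omega> q c)"
      "(1 - \<alpha>) * card (\<Omega> c c) \<le> card (R \<inter> \<Omega> q c)"
      by (simp_all add: W_def \<Omega>_def)
  qed
  have card_R: "card R = (\<Sum>c\<in>{1..k}. \<Sum>q\<in>{1..k} - {c}. card (R \<inter> \<Omega> q c))"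
    unfolding \<Omega>_def by (rule card_eq_sum_colour_pairs[OF V]) (auto simp: R_def W'_def W_def)
  have "card W' = (\<Sum>c\<in>{1..k}. \<Sum>q\<in>{1..k} - {c}. card (W' \<inter> \<Omega> q c))"
    unfolding \<Omega>_def by (rule card_eq_sum_colour_pairs[OF V]) (simp add: W'_def W_def)
  also have "\<dots> = (\<Sum>c\<in>{1..k}. \<Sum>q\<in>{1..k} - {c}. card (\<Omega> q c))"
    using \<Omega>_W' by (intro sum.cong refl) auto
  finally have "(1 - \<alpha>) * card W' = (\<Sum>c\<in>{1..k}. \<Sum>q\<in>{1..k} - {c}. (1 - \<alpha>) * card (\<Omega> q c))"
    by (simp add: sum_distrib_left)
  also have "\<dots> \<le> card R"
    unfolding card_R of_nat_sum by (intro sum_mono fibre) auto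
  finally show "(1 - \<alpha>) * card W' \<le> card R" .
  have "card W = card W' + card {\<sigma> \<in> W. \<sigma> v = \<sigma> u}"
    using finite_colourings[OF V(1)] unfolding W'_def W_def
    by (subst card_Un_disjoint[symmetric]) (auto intro: arg_cong[where f = card])
  also have "card {\<sigma> \<in> W. \<sigma> v = \<sigma> u} = (\<Sum>c\<in>{1..k}. card (\<Omega> c c))"
    unfolding W_def \<Omega>_def by (rule card_diff_eq_sum_colours[OF V(1,2)])
  finally have "(1 - \<alpha>) * (real k - 1) * (real (card W) - card W')
      = (\<Sum>c\<in>{1..k}. (real k - 1) * ((1 - \<alpha>) * card (\<Omega> c c)))"
    by (simp add: sum_distrib_left algebra_simps)
  also have "\<dots> = (\<Sum>c\<in>{1..k}. \<Sum>q\<in>{1..k} - {c}. (1 - \<alpha>) * card (\<Omega> c c))"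
    using k by (intro sum.cong refl) (simp add: of_nat_diff)
  also have "\<dots> \<le> card R"
    unfolding card_R of_nat_sum by (intro sum_mono fibre) auto
  finally show "(1 - \<alpha>) * (real (card W) - card W') \<le> 1 / (real k - 1) * card R"
    using k by (simp add: field_simps)
qed

lemma uniform_deficit_proc_step_le:
  fixes V :: "'a set" and E :: "'a set set" and v u :: 'a and k :: nat and \<alpha> :: real
  defines "W \<equiv> colourings V k E" and "W' \<equiv> colourings V k (insert {v, u} E)"
  assumes V: "finite V" "v \<in> V" "u \<in> V" "v \<noteq> u" and ne: "W' \<noteq> {}" and \<alpha>: "0 \<le> \<alpha>"
    and iso: "\<forall>c\<in>{1..k}. \<forall>q\<in>{1..k}. c \<noteq> q \<longrightarrow>
               alpha_iso_with \<alpha> (colourings_vu V k E v u c c) (colourings_vu V k E v u q c)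
                 (\<lambda>\<sigma>. swapH E v \<sigma> q)"
  shows "uniform_deficit W' (bind_pmf (pmf_of_set W) (proc_step k E v u)) \<le> \<alpha>"
proof -
  define R where "R = W' \<inter> swap_images E v u W"
  have W': "W' = {\<sigma> \<in> W. \<sigma> v \<noteq> \<sigma> u}"
    unfolding W_def W'_def using \<open>v \<noteq> u\<close> by (rule colourings_insert_edge)
  have W: "finite W" "W \<noteq> {}" using V(1) ne W' by (auto simp: W_def finite_colourings)
  have range: "\<sigma> v \<in> {1..k}" "\<sigma> u \<in> {1..k}" if "\<sigma> \<in> W" for \<sigma>
    using colouring_in_range[OF that[unfolded W_def]] V by blast+
  obtain t0 where t0: "t0 \<in> W'" using ne by blast
  then have k: "2 \<le> k" using range[of t0] W' by fastforce
  have card_R: "(1 - \<alpha>) * card W' \<le> card R"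
    "(1 - \<alpha>) * (real (card W) - card W') \<le> 1 / (real k - 1) * card R"
    using card_swap_images_ge[OF V(1-3) k iso] by (simp_all only: R_def W' W_def)
  have mass: "pmf (bind_pmf (pmf_of_set W) (proc_step k E v u)) t
      = (\<Sum>s\<in>W. pmf (proc_step k E v u s) t) / card W" for t
    using W by (simp add: pmf_bind_pmf_of_set)
  show ?thesis
    unfolding uniform_deficit_def
  proof (rule sum_shortfall_le_of_mass_bounds[OF _ _ _ _ _ \<alpha> _ _ card_R])
    show "finite W'" "R \<subseteq> W'" "W' \<noteq> {}" "real (card W') \<le> real (card W)" "0 < 1 / (real k - 1)"
      using W W' k t0 by (auto simp: R_def intro: card_mono)
    show "1 / card W \<le> pmf (bind_pmf (pmf_of_set W) (proc_step k E v u)) t" if "t \<in> W'" for t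
      using that sum_pmf_proc_step_ge[OF W(1), of t v u k E]
      unfolding mass W' by (simp add: divide_right_mono)
    show "(1 + 1 / (real k - 1)) / card W \<le> pmf (bind_pmf (pmf_of_set W) (proc_step k E v u)) t"
      if "t \<in> R" for t
    proof -
      obtain s where "t \<in> W" "t v \<noteq> t u" "s \<in> W" "s v = t u" "s u = t u" "swapH E v s (t v) = t"
        using \<open>t \<in> R\<close> unfolding R_def W' swap_images_def by blast
      then have "1 + 1 / (real k - 1) \<le> (\<Sum>s\<in>W. pmf (proc_step k E v u s) t)"
        using range by (intro sum_pmf_proc_step_ge_swapH[OF W(1)]) auto
      then show ?thesis unfolding mass by (simp add: divide_right_mono)
    qed
  qed
qed

lemma edge_deletion_sequence:
  assumes "\<forall>i<r. v i \<noteq> u i \<and> {v i, u i} \<in> G (Suc i) \<and> G i = G (Suc i) - {{v i, u i}}"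
  shows "i < r \<Longrightarrow> G (Suc i) = insert {v i, u i} (G i)" and "i \<le> r \<Longrightarrow> G i \<subseteq> G r"
proof -
  show G_Suc: "G (Suc i) = insert {v i, u i} (G i)" if "i < r" for i
    using assms that by auto
  show "G i \<subseteq> G r" if "i \<le> r"
  proof (rule lift_Suc_mono_le_ivl[of "{..<r}"])
    show "G n \<subseteq> G (Suc n)" if "n \<in> {..<r}" for n
      using G_Suc[of n] that by blast
  qed (use that in auto)
qed

theorem theorem5:
  fixes V :: "'a set" and k r :: nat and G :: "nat \<Rightarrow> 'a set set"
    and v u :: "nat \<Rightarrow> 'a" and \<alpha> :: real
  assumes finV: "finite V"
    and graph: "\<forall>e\<in>G r. \<exists>x y. x \<in> V \<and> y \<in> V \<and> x \<noteq> y \<and> e = {x, y}"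
    and seq: "\<forall>i<r. v i \<noteq> u i \<and> {v i, u i} \<in> G (Suc i) \<and> G i = G (Suc i) - {{v i, u i}}"
    and nonempty: "colourings V k (G r) \<noteq> {}"
    and alpha: "0 \<le> \<alpha>" "\<alpha> \<le> 1"
    and iso: "\<forall>i<r. \<forall>c\<in>{1..k}. \<forall>q\<in>{1..k}. c \<noteq> q \<longrightarrow>
               alpha_iso_with \<alpha> (colourings_vu V k (G i) (v i) (u i) c c)
                                (colourings_vu V k (G i) (v i) (u i) q c)
                                (\<lambda>\<sigma>. swapH (G i) (v i) \<sigma> q)"
  shows "tv_dist (pmf_of_set (colourings V k (G r))) (procY V k G v u r) \<le> real r * \<alpha>"
proof -
  note G_Suc = edge_deletion_sequence(1)[OF seq] and G_le = edge_deletion_sequence(2)[OF seq]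
  have vu: "v i \<in> V" "u i \<in> V" if "i < r" for i
  proof -
    have "{v i, u i} \<in> G r" using G_Suc[OF that] G_le[of "Suc i"] that by auto
    then obtain x y where "x \<in> V" "y \<in> V" "{v i, u i} = {x, y}" using graph by blast
    then show "v i \<in> V" "u i \<in> V" by (auto simp: doubleton_eq_iff)
  qed
  have ne: "colourings V k (G i) \<noteq> {}" if "i \<le> r" for i
    using colourings_mono[OF G_le[OF that]] nonempty by blast
  have "uniform_deficit (colourings V k (G r)) (procY V k G v u r) \<le> real r * \<alpha>"
  proof (rule uniform_deficit_iterated_bind_le)
    show "uniform_deficit (colourings V k (G (Suc i)))
        (bind_pmf (pmf_of_set (colourings V k (G i))) (proc_step k (G i) (v i) (u i))) \<le> \<alpha>"
      if "i < r" for i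
      unfolding G_Suc[OF that]
    proof (rule uniform_deficit_proc_step_le[OF finV vu[OF that] _ _ alpha(1)])
      show "v i \<noteq> u i" using seq that by blast
      show "colourings V k (insert {v i, u i} (G i)) \<noteq> {}" using ne[of "Suc i"] G_Suc[OF that] that by simp
    qed (use iso that in blast)
  next
    show "finite (colourings V k (G i)) \<and> colourings V k (G i) \<noteq> {}" if "i \<le> r" for i
      using finite_colourings[OF finV] ne[OF that] by blast
  qed simp_all
  with tv_dist_pmf_of_set_le_uniform_deficit[OF finite_colourings[OF finV] nonempty]
  show ?thesis by (rule order_trans)
qed

end
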